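(* Let $N$ be a positive integer, $S>0$, and let $u\mapsto \mathbf{s}(u)\in\mathbb{R}^N$, $u\in[0,1)$, be a measurable map with $\|\mathbf{s}(u)\|=S$ for all $u$. Let $\theta\in(0,\frac{\pi}{2})$. Then there exists a unit vector $\mathbf{g}\in\mathbb{R}^N$ such that the Lebesgue measure of the set $\{u\in[0,1):\ \langle \mathbf{s}(u),\mathbf{g}\rangle\ge S\cos\theta\}$ is at least \[ \exp\left\{ \frac{N}{2}\cdot\left[\log\left(\sin^{2}\theta\right)-\Theta\left(\frac{\log N}{N}\right)\right]\right\}, \] where the $\Theta(\frac{\log N}{N})$ term depends only on $N$ and $\theta$ (not on the map $\mathbf{s}$).
   Context: In the paper, $S=\sqrt{PT}$, $N=2WT$, and $\mathbf{s}(u)$ is the coefficient vector of the transmitted signal of a band-limited modulation system, normalized so that the power constraint holds with equality. $\langle\cdot,\cdot\rangle$ is the standard inner product; logarithms are natural. *)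

theory Defs
  imports "HOL-Analysis.Analysis" "HOL-Library.Landau_Symbols"
begin

text \<open>Vectors in R^N are represented as functions nat => real, only indices i < N matter.\<close>

definition vinner :: "nat \<Rightarrow> (nat \<Rightarrow> real) \<Rightarrow> (nat \<Rightarrow> real) \<Rightarrow> real" where
  "vinner N x y = (\<Sum>i<N. x i * y i)"

definition vnorm :: "nat \<Rightarrow> (nat \<Rightarrow> real) \<Rightarrow> real" where
  "vnorm N x = sqrt (\<Sum>i<N. (x i)\<^sup>2)"

end

theory Submission
  imports Defs "HOL-Real_Asymp.Real_Asymp"
begin

text \<open>Average over \<open>g\<close> in the unit ball \<open>B\<close> of \<open>\<real>\<^sup>N\<close>. For every \<open>u\<close>, the points of \<open>B\<close>
  within angle \<open>\<theta>\<close> of \<open>s(u)\<close> form a cone whose volume does not depend on the direction of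
  \<open>s(u)\<close>, since Lebesgue measure is invariant under Givens rotations (each a product of three
  shears). The cone around \<open>e\<^sub>0\<close> contains the cylinder
  \<open>[cos \<theta> N/(N+1), cos \<theta>] \<times> B\<^sub>N\<^sub>-\<^sub>1(sin \<theta> N/(N+1))\<close>, while \<open>B\<close> lies in
  \<open>[-1, 1] \<times> B\<^sub>N\<^sub>-\<^sub>1(1)\<close>. By Fubini, the measure of \<open>{u. g within angle \<theta> of s(u)}\<close>,
  averaged over \<open>g \<in> B\<close>, is at least the ratio of the two cylinder volumes, in which the
  volume of \<open>B\<^sub>N\<^sub>-\<^sub>1\<close> cancels; some \<open>g\<close> attains half of it, and so does \<open>g / |g|\<close>.
  The ratio is \<open>cos \<theta>/(2(N+1)) \<cdot> (sin \<theta> N/(N+1))\<^sup>N\<^sup>-\<^sup>1\<close>, which is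
  \<open>exp (N/2 (ln sin\<^sup>2 \<theta> - \<Theta>(ln N / N)))\<close>.\<close>

lemma nn_integral_lborel_shear_fst:
  fixes k :: "real \<times> real \<Rightarrow> ennreal"
  assumes [measurable]: "k \<in> borel_measurable (lborel \<Otimes>\<^sub>M lborel)"
  shows "(\<integral>\<^sup>+y. \<integral>\<^sup>+z. k (y + p * z, z) \<partial>lborel \<partial>lborel) = (\<integral>\<^sup>+y. \<integral>\<^sup>+z. k (y, z) \<partial>lborel \<partial>lborel)"
proof -
  have [measurable]: "(\<lambda>(z, y). k (y + p * z, z)) \<in> borel_measurable (lborel \<Otimes>\<^sub>M lborel)"
    "(\<lambda>(z, y). k (y, z)) \<in> borel_measurable (lborel \<Otimes>\<^sub>M lborel)"
    by measurable
  have "(\<integral>\<^sup>+y. \<integral>\<^sup>+z. k (y + p * z, z) \<partial>lborel \<partial>lborel) = (\<integral>\<^sup>+z. \<integral>\<^sup>+y. k (y + p * z, z) \<partial>lborel \<partial>lborel)"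
    using lborel_pair.Fubini'[of "\<lambda>z y. k (y + p * z, z)"] by simp
  also have "\<dots> = (\<integral>\<^sup>+z. \<integral>\<^sup>+y. k (y, z) \<partial>lborel \<partial>lborel)"
  proof (rule nn_integral_cong)
    fix z
    show "(\<integral>\<^sup>+y. k (y + p * z, z) \<partial>lborel) = (\<integral>\<^sup>+y. k (y, z) \<partial>lborel)"
      using nn_integral_real_affine[of "\<lambda>y. k (y, z)" 1 "p * z"] by (simp add: add.commute)
  qed
  also have "\<dots> = (\<integral>\<^sup>+y. \<integral>\<^sup>+z. k (y, z) \<partial>lborel \<partial>lborel)"
    using lborel_pair.Fubini'[of "\<lambda>z y. k (y, z)"] by simp
  finally show ?thesis .
qed

lemma nn_integral_lborel_shear_snd:
  fixes k :: "real \<times> real \<Rightarrow> ennreal"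
  assumes "k \<in> borel_measurable (lborel \<Otimes>\<^sub>M lborel)"
  shows "(\<integral>\<^sup>+y. \<integral>\<^sup>+z. k (y, z + q * y) \<partial>lborel \<partial>lborel) = (\<integral>\<^sup>+y. \<integral>\<^sup>+z. k (y, z) \<partial>lborel \<partial>lborel)"
proof (rule nn_integral_cong)
  fix y
  show "(\<integral>\<^sup>+z. k (y, z + q * y) \<partial>lborel) = (\<integral>\<^sup>+z. k (y, z) \<partial>lborel)"
    using assms nn_integral_real_affine[of "\<lambda>z. k (y, z)" 1 "q * y"] by (simp add: add.commute)
qed

lemma nn_integral_lborel_neg:
  fixes k :: "real \<times> real \<Rightarrow> ennreal"
  assumes [measurable]: "k \<in> borel_measurable (lborel \<Otimes>\<^sub>M lborel)"
  shows "(\<integral>\<^sup>+y. \<integral>\<^sup>+z. k (- y, - z) \<partial>lborel \<partial>lborel) = (\<integral>\<^sup>+y. \<integral>\<^sup>+z. k (y, z) \<partial>lborel \<partial>lborel)"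
proof -
  have "(\<integral>\<^sup>+y. \<integral>\<^sup>+z. k (- y, - z) \<partial>lborel \<partial>lborel) = (\<integral>\<^sup>+y. \<integral>\<^sup>+z. k (- y, z) \<partial>lborel \<partial>lborel)"
  proof (rule nn_integral_cong)
    fix y
    show "(\<integral>\<^sup>+z. k (- y, - z) \<partial>lborel) = (\<integral>\<^sup>+z. k (- y, z) \<partial>lborel)"
      using nn_integral_real_affine[of "\<lambda>z. k (- y, z)" "-1" 0] by simp
  qed
  also have "\<dots> = (\<integral>\<^sup>+y. \<integral>\<^sup>+z. k (y, z) \<partial>lborel \<partial>lborel)"
    using nn_integral_real_affine[of "\<lambda>y. \<integral>\<^sup>+z. k (y, z) \<partial>lborel" "-1" 0] by simp
  finally show ?thesis .
qed

text \<open>A rotation of the plane other than the half turn is the product of three shears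
  \<open>(y, z) \<mapsto> (y + p z, z)\<close>, \<open>(y, z) \<mapsto> (y, z + q y)\<close>, \<open>(y, z) \<mapsto> (y + p z, z)\<close>
  with \<open>p = b / (1 + a)\<close> and \<open>q = -b\<close>.\<close>

lemma nn_integral_lborel_rotation:
  fixes k :: "real \<times> real \<Rightarrow> ennreal"
  assumes [measurable]: "k \<in> borel_measurable (lborel \<Otimes>\<^sub>M lborel)" and ab: "a\<^sup>2 + b\<^sup>2 = 1"
  shows "(\<integral>\<^sup>+y. \<integral>\<^sup>+z. k (a * y + b * z, - b * y + a * z) \<partial>lborel \<partial>lborel) = (\<integral>\<^sup>+y. \<integral>\<^sup>+z. k (y, z) \<partial>lborel \<partial>lborel)"
proof (cases "a = -1")
  case True
  with ab have "b = 0" by (simp add: power2_eq_square)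
  with True show ?thesis
    using nn_integral_lborel_neg [of k] by simp
next
  case False
  define p where "p = b / (1 + a)"
  define q where "q = - b"
  have a: "a = 1 + p * q" and b: "b = p * (1 + a)"
    using False ab by (auto simp: p_def q_def field_simps power2_eq_square)
  define k1 where "k1 = (\<lambda>(y, z). k (y + p * z, z))"
  define k2 where "k2 = (\<lambda>(y, z). k1 (y, z + q * y))"
  have [measurable]: "k1 \<in> borel_measurable (lborel \<Otimes>\<^sub>M lborel)" "k2 \<in> borel_measurable (lborel \<Otimes>\<^sub>M lborel)"
    unfolding k1_def k2_def by measurable
  have k_k2: "k (a * y + b * z, - b * y + a * z) = k2 (y + p * z, z)" for y z
  proof -
    have "(y + p * z) + p * (z + q * (y + p * z)) = (1 + p * q) * y + p * (1 + (1 + p * q)) * z"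
      by (simp add: algebra_simps)
    then have "a * y + b * z = (y + p * z) + p * (z + q * (y + p * z))"
      by (simp add: a [symmetric] b)
    moreover have "- b * y + a * z = z + q * (y + p * z)"
      by (simp add: a q_def algebra_simps)
    ultimately show ?thesis by (simp add: k2_def k1_def)
  qed
  have "(\<integral>\<^sup>+y. \<integral>\<^sup>+z. k (a * y + b * z, - b * y + a * z) \<partial>lborel \<partial>lborel)
      = (\<integral>\<^sup>+y. \<integral>\<^sup>+z. k2 (y + p * z, z) \<partial>lborel \<partial>lborel)"
    by (simp only: k_k2)
  also have "\<dots> = (\<integral>\<^sup>+y. \<integral>\<^sup>+z. k2 (y, z) \<partial>lborel \<partial>lborel)"
    by (rule nn_integral_lborel_shear_fst) measurable
  also have "\<dots> = (\<integral>\<^sup>+y. \<integral>\<^sup>+z. k1 (y, z) \<partial>lborel \<partial>lborel)"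
    unfolding k2_def by (simp add: nn_integral_lborel_shear_snd)
  also have "\<dots> = (\<integral>\<^sup>+y. \<integral>\<^sup>+z. k (y + p * z, z) \<partial>lborel \<partial>lborel)"
    by (simp add: k1_def)
  also have "\<dots> = (\<integral>\<^sup>+y. \<integral>\<^sup>+z. k (y, z) \<partial>lborel \<partial>lborel)"
    by (rule nn_integral_lborel_shear_fst) measurable
  finally show ?thesis .
qed

definition givens :: "nat \<Rightarrow> nat \<Rightarrow> real \<Rightarrow> real \<Rightarrow> (nat \<Rightarrow> real) \<Rightarrow> nat \<Rightarrow> real" where
  "givens i j a b x = x(i := a * x i + b * x j, j := - b * x i + a * x j)"

lemma measurable_givens [measurable]:
  assumes "i \<in> A" "j \<in> A"
  shows "givens i j a b \<in> measurable (PiM A (\<lambda>_. lborel)) (PiM A (\<lambda>_. lborel))"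
  unfolding givens_def using assms by (intro measurable_fun_upd[where J = A]) auto

lemma nn_integral_PiM_insert2:
  fixes g :: "('i \<Rightarrow> real) \<Rightarrow> ennreal"
  assumes "finite B" "i \<notin> B" "j \<notin> B" "i \<noteq> j"
    and [measurable]: "g \<in> borel_measurable (PiM (insert i (insert j B)) (\<lambda>_. lborel))"
  shows "(\<integral>\<^sup>+x. g x \<partial>PiM (insert i (insert j B)) (\<lambda>_. lborel)) =
    (\<integral>\<^sup>+w. \<integral>\<^sup>+z. \<integral>\<^sup>+y. g (w(j := z, i := y)) \<partial>lborel \<partial>lborel \<partial>PiM B (\<lambda>_. lborel))"
proof -
  interpret product_sigma_finite "\<lambda>_ :: 'i. lborel :: real measure" by standard
  have "(\<integral>\<^sup>+x. g x \<partial>PiM (insert i (insert j B)) (\<lambda>_. lborel)) =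
      (\<integral>\<^sup>+x. \<integral>\<^sup>+y. g (x(i := y)) \<partial>lborel \<partial>PiM (insert j B) (\<lambda>_. lborel))"
    using assms by (intro product_nn_integral_insert) auto
  also have "\<dots> = (\<integral>\<^sup>+w. \<integral>\<^sup>+z. \<integral>\<^sup>+y. g (w(j := z, i := y)) \<partial>lborel \<partial>lborel \<partial>PiM B (\<lambda>_. lborel))"
    using assms by (intro product_nn_integral_insert) auto
  finally show ?thesis .
qed

lemma nn_integral_PiM_givens:
  fixes h :: "(nat \<Rightarrow> real) \<Rightarrow> ennreal"
  assumes "finite A" "i \<in> A" "j \<in> A" "i \<noteq> j" "a\<^sup>2 + b\<^sup>2 = 1"
    and [measurable]: "h \<in> borel_measurable (PiM A (\<lambda>_. lborel))"
  shows "(\<integral>\<^sup>+x. h (givens i j a b x) \<partial>PiM A (\<lambda>_. lborel)) = (\<integral>\<^sup>+x. h x \<partial>PiM A (\<lambda>_. lborel))"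
proof -
  define B where "B = A - {i, j}"
  have A: "A = insert i (insert j B)" and B: "finite B" "i \<notin> B" "j \<notin> B"
    using assms by (auto simp: B_def)
  have hB [measurable]: "h \<in> borel_measurable (PiM (insert i (insert j B)) (\<lambda>_. lborel))"
    using assms by (simp add: A [symmetric])
  have rotate: "(\<integral>\<^sup>+z. \<integral>\<^sup>+y. h (w(j := a * z - b * y, i := b * z + a * y)) \<partial>lborel \<partial>lborel) =
      (\<integral>\<^sup>+z. \<integral>\<^sup>+y. h (w(j := z, i := y)) \<partial>lborel \<partial>lborel)"
    if "w \<in> space (PiM B (\<lambda>_. lborel))" for w
  proof -
    have "(\<lambda>p. w(j := fst p, i := snd p)) \<in> measurable (lborel \<Otimes>\<^sub>M lborel) (PiM (insert i (insert j B)) (\<lambda>_. lborel))"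
      using that by (intro measurable_fun_upd[where J = "insert j B"] measurable_fun_upd[where J = B]) auto
    then have "(\<lambda>p. h (w(j := fst p, i := snd p))) \<in> borel_measurable (lborel \<Otimes>\<^sub>M lborel)"
      using hB by (rule measurable_compose)
    then show ?thesis
      using nn_integral_lborel_rotation[of "\<lambda>p. h (w(j := fst p, i := snd p))" a "- b"] assms(5)
      by simp
  qed
  have "(\<integral>\<^sup>+x. h (givens i j a b x) \<partial>PiM A (\<lambda>_. lborel)) =
      (\<integral>\<^sup>+w. \<integral>\<^sup>+z. \<integral>\<^sup>+y. h (givens i j a b (w(j := z, i := y))) \<partial>lborel \<partial>lborel \<partial>PiM B (\<lambda>_. lborel))"
    unfolding A using B assms(4) by (intro nn_integral_PiM_insert2) auto
  also have "\<dots> = (\<integral>\<^sup>+w. \<integral>\<^sup>+z. \<integral>\<^sup>+y. h (w(j := a * z - b * y, i := b * z + a * y)) \<partial>lborel \<partial>lborel \<partial>PiM B (\<lambda>_. lborel))"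
    using assms(4) by (simp add: givens_def fun_upd_twist algebra_simps)
  also have "\<dots> = (\<integral>\<^sup>+w. \<integral>\<^sup>+z. \<integral>\<^sup>+y. h (w(j := z, i := y)) \<partial>lborel \<partial>lborel \<partial>PiM B (\<lambda>_. lborel))"
    by (intro nn_integral_cong rotate)
  also have "\<dots> = (\<integral>\<^sup>+x. h x \<partial>PiM A (\<lambda>_. lborel))"
    unfolding A using B assms(4) by (intro nn_integral_PiM_insert2[symmetric]) auto
  finally show ?thesis .
qed

lemma nn_integral_PiM_neg_coordinate:
  fixes h :: "('i \<Rightarrow> real) \<Rightarrow> ennreal"
  assumes "finite A" "i \<in> A" and [measurable]: "h \<in> borel_measurable (PiM A (\<lambda>_. lborel))"
  shows "(\<integral>\<^sup>+x. h (x(i := - x i)) \<partial>PiM A (\<lambda>_. lborel)) = (\<integral>\<^sup>+x. h x \<partial>PiM A (\<lambda>_. lborel))"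
proof -
  interpret product_sigma_finite "\<lambda>_ :: 'i. lborel :: real measure" by standard
  define B where "B = A - {i}"
  have A: "A = insert i B" and B: "finite B" "i \<notin> B"
    using assms by (auto simp: B_def)
  have hB [measurable]: "h \<in> borel_measurable (PiM (insert i B) (\<lambda>_. lborel))"
    using assms by (simp add: A [symmetric])
  have "(\<lambda>x. x(i := - x i)) \<in> measurable (PiM (insert i B) (\<lambda>_. lborel)) (PiM (insert i B) (\<lambda>_. lborel))"
    by (intro measurable_fun_upd[where J = "insert i B"]) auto
  then have [measurable]: "(\<lambda>x. h (x(i := - x i))) \<in> borel_measurable (PiM (insert i B) (\<lambda>_. lborel))"
    using hB by (rule measurable_compose)
  have "(\<integral>\<^sup>+x. h (x(i := - x i)) \<partial>PiM A (\<lambda>_. lborel)) =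
      (\<integral>\<^sup>+w. \<integral>\<^sup>+(y::real). h ((w(i := y))(i := - (w(i := y)) i)) \<partial>lborel \<partial>PiM B (\<lambda>_. lborel))"
    unfolding A using B by (intro product_nn_integral_insert) auto
  also have "\<dots> = (\<integral>\<^sup>+w. \<integral>\<^sup>+(y::real). h (w(i := - y)) \<partial>lborel \<partial>PiM B (\<lambda>_. lborel))"
    by simp
  also have "\<dots> = (\<integral>\<^sup>+w. \<integral>\<^sup>+(y::real). h (w(i := y)) \<partial>lborel \<partial>PiM B (\<lambda>_. lborel))"
  proof (rule nn_integral_cong)
    fix w :: "'i \<Rightarrow> real" assume "w \<in> space (PiM B (\<lambda>_. lborel))"
    from measurable_component_update [OF this B(2)] hB
    have "(\<lambda>y. h (w(i := y))) \<in> borel_measurable lborel"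
      by (rule measurable_compose)
    then show "(\<integral>\<^sup>+(y::real). h (w(i := - y)) \<partial>lborel) = (\<integral>\<^sup>+(y::real). h (w(i := y)) \<partial>lborel)"
      using nn_integral_real_affine[of "\<lambda>y. h (w(i := y))" "-1" 0] by simp
  qed
  also have "\<dots> = (\<integral>\<^sup>+x. h x \<partial>PiM A (\<lambda>_. lborel))"
    unfolding A using B by (intro product_nn_integral_insert [symmetric]) auto
  finally show ?thesis .
qed

abbreviation lborel_vec :: "nat \<Rightarrow> (nat \<Rightarrow> real) measure" where
  "lborel_vec N \<equiv> PiM {..<N} (\<lambda>_. lborel)"

lemma vnorm_eq_sqrt_vinner: "vnorm N x = sqrt (vinner N x x)"
  by (simp add: vnorm_def vinner_def power2_eq_square)

lemma borel_measurable_vinner [measurable]: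
  "(\<lambda>x. vinner N t x) \<in> borel_measurable (lborel_vec N)"
  "(\<lambda>x. vinner N x x) \<in> borel_measurable (lborel_vec N)"
  unfolding vinner_def by measurable

lemma vinner_givens:
  assumes "i < N" "j < N" "i \<noteq> j" "a\<^sup>2 + b\<^sup>2 = 1"
  shows "vinner N (givens i j a b t) (givens i j a b x) = vinner N t x"
proof -
  have N: "{..<N} = insert i (insert j ({..<N} - {i, j}))"
    using assms by auto
  have "(a * t i + b * t j) * (a * x i + b * x j) + (- b * t i + a * t j) * (- b * x i + a * x j)
      = (a\<^sup>2 + b\<^sup>2) * (t i * x i + t j * x j)"
    by (simp add: algebra_simps power2_eq_square)
  with assms show ?thesis
    unfolding vinner_def by (subst (1 2) N) (simp add: givens_def)
qed

lemma nn_integral_vinner_givens: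
  fixes f :: "real \<times> real \<Rightarrow> ennreal"
  assumes [measurable]: "f \<in> borel_measurable borel"
    and "i < N" "j < N" "i \<noteq> j" "a\<^sup>2 + b\<^sup>2 = 1"
  shows "(\<integral>\<^sup>+x. f (vinner N (givens i j a b t) x, vinner N x x) \<partial>lborel_vec N) =
    (\<integral>\<^sup>+x. f (vinner N t x, vinner N x x) \<partial>lborel_vec N)"
proof -
  let ?t = "givens i j a b t"
  have "(\<integral>\<^sup>+x. f (vinner N t x, vinner N x x) \<partial>lborel_vec N) =
      (\<integral>\<^sup>+x. f (vinner N ?t (givens i j a b x), vinner N (givens i j a b x) (givens i j a b x)) \<partial>lborel_vec N)"
    using assms by (simp add: vinner_givens)
  also have "\<dots> = (\<integral>\<^sup>+x. f (vinner N ?t x, vinner N x x) \<partial>lborel_vec N)"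
    using assms by (intro nn_integral_PiM_givens [where h = "\<lambda>x. f (vinner N ?t x, vinner N x x)"]) auto
  finally show ?thesis ..
qed

lemma nn_integral_vinner_axis_aligned:
  fixes f :: "real \<times> real \<Rightarrow> ennreal"
  assumes [measurable]: "f \<in> borel_measurable borel"
    and "1 \<le> N" "vinner N t t = 1" "\<forall>i\<in>{1..<N}. t i = 0"
  shows "(\<integral>\<^sup>+x. f (vinner N t x, vinner N x x) \<partial>lborel_vec N) = (\<integral>\<^sup>+x. f (x 0, vinner N x x) \<partial>lborel_vec N)"
proof -
  have vinner_t: "vinner N t x = t 0 * x 0" for x
    using assms(2,4) sum.remove [of "{..<N}" 0 "\<lambda>i. t i * x i"] by (simp add: vinner_def)
  then have "t 0 = 1 \<or> t 0 = -1"
    using assms(3) by (simp add: power2_eq_1_iff [symmetric] power2_eq_square)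
  then show ?thesis
  proof
    assume "t 0 = -1"
    have flip: "vinner N (x(0 := - x 0)) (x(0 := - x 0)) = vinner N x x" for x
      unfolding vinner_def by (intro sum.cong) auto
    from \<open>t 0 = -1\<close> have "(\<integral>\<^sup>+x. f (vinner N t x, vinner N x x) \<partial>lborel_vec N) =
        (\<integral>\<^sup>+x. (\<lambda>x. f (x 0, vinner N x x)) (x(0 := - x 0)) \<partial>lborel_vec N)"
      by (simp add: vinner_t flip)
    also have "\<dots> = (\<integral>\<^sup>+x. f (x 0, vinner N x x) \<partial>lborel_vec N)"
      using assms(2) by (intro nn_integral_PiM_neg_coordinate) auto
    finally show ?thesis .
  qed (simp add: vinner_t)
qed

lemma givens_eliminate:
  assumes "t k \<noteq> 0" "k \<noteq> 0"
  obtains a b where "a\<^sup>2 + b\<^sup>2 = 1" "givens 0 k a b t k = 0"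
proof
  define r where "r = sqrt ((t 0)\<^sup>2 + (t k)\<^sup>2)"
  have "0 < r" using assms(1) by (simp add: r_def add_nonneg_pos)
  show "(t 0 / r)\<^sup>2 + (t k / r)\<^sup>2 = 1"
    using \<open>0 < r\<close> assms(1) by (simp add: r_def power_divide add_divide_distrib [symmetric])
  show "givens 0 k (t 0 / r) (t k / r) t k = 0"
    using assms(2) \<open>0 < r\<close> by (simp add: givens_def field_simps)
qed

text \<open>Givens rotations in the planes \<open>(0, k)\<close>, for \<open>k = N - 1, \<dots>, 1\<close>, move a unit vector to \<open>\<plusminus>e\<^sub>0\<close>.\<close>

lemma nn_integral_vinner_axis:
  fixes f :: "real \<times> real \<Rightarrow> ennreal"
  assumes [measurable]: "f \<in> borel_measurable borel" and "1 \<le> N" "vinner N t t = 1"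
  shows "(\<integral>\<^sup>+x. f (vinner N t x, vinner N x x) \<partial>lborel_vec N) = (\<integral>\<^sup>+x. f (x 0, vinner N x x) \<partial>lborel_vec N)"
proof -
  have "(\<integral>\<^sup>+x. f (vinner N t x, vinner N x x) \<partial>lborel_vec N) = (\<integral>\<^sup>+x. f (x 0, vinner N x x) \<partial>lborel_vec N)"
    if "0 < k" "k \<le> N" "\<forall>i\<in>{k..<N}. t i = 0" "vinner N t t = 1" for k t
    using that
  proof (induction k arbitrary: t rule: nat_induct_non_zero)
    case 1
    then show ?case by (intro nn_integral_vinner_axis_aligned) auto
  next
    case (Suc k)
    show ?case
    proof (cases "t k = 0")
      case True
      with Suc.prems show ?thesis
        by (intro Suc.IH) (auto simp: le_less Suc_le_eq)
    next
      case False
      have k: "0 < k" "k < N" using Suc by auto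
      obtain a b where ab: "a\<^sup>2 + b\<^sup>2 = 1" and "givens 0 k a b t k = 0"
        using givens_eliminate [of t k] False k by blast
      with Suc.prems k have "\<forall>i\<in>{k..<N}. givens 0 k a b t i = 0"
        by (auto simp: givens_def)
      moreover have "vinner N (givens 0 k a b t) (givens 0 k a b t) = 1"
        using vinner_givens [OF _ k(2) _ ab] k Suc.prems by simp
      ultimately have "(\<integral>\<^sup>+x. f (vinner N (givens 0 k a b t) x, vinner N x x) \<partial>lborel_vec N) =
          (\<integral>\<^sup>+x. f (x 0, vinner N x x) \<partial>lborel_vec N)"
        using Suc.IH k by simp
      moreover have "(\<integral>\<^sup>+x. f (vinner N (givens 0 k a b t) x, vinner N x x) \<partial>lborel_vec N) =
          (\<integral>\<^sup>+x. f (vinner N t x, vinner N x x) \<partial>lborel_vec N)"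
        using k ab by (intro nn_integral_vinner_givens) auto
      ultimately show ?thesis by simp
    qed
  qed
  from this [of N t] assms show ?thesis by simp
qed

definition cylinder :: "nat \<Rightarrow> real \<Rightarrow> real \<Rightarrow> real \<Rightarrow> (nat \<Rightarrow> real) set" where
  "cylinder N a c r = {x \<in> space (lborel_vec N). x 0 \<in> {a..c} \<and> sqrt (\<Sum>i\<in>{..<N} - {0}. (x i)\<^sup>2) \<le> r}"

lemma sets_cylinder [measurable]:
  assumes "1 \<le> N"
  shows "cylinder N a c r \<in> sets (lborel_vec N)"
proof -
  have [measurable]: "0 \<in> {..<N}" using assms by auto
  show ?thesis unfolding cylinder_def by measurable
qed

lemma emeasure_cylinder:
  assumes "1 \<le> N" "a \<le> c" "0 < r"
  shows "emeasure (lborel_vec N) (cylinder N a c r) = ennreal ((c - a) * unit_ball_vol (real (N - 1)) * r ^ (N - 1))"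
proof -
  interpret product_sigma_finite "\<lambda>_ :: nat. lborel :: real measure" by standard
  let ?Q = "PiM ({..<N} - {0}) (\<lambda>_. lborel :: real measure)"
  define D where "D = {x \<in> space ?Q. sqrt (\<Sum>i\<in>{..<N} - {0}. (x i)\<^sup>2) \<le> r}"
  have [measurable]: "D \<in> sets ?Q" unfolding D_def by measurable
  have D: "emeasure ?Q D = ennreal (unit_ball_vol (real (N - 1)) * r ^ (N - 1))"
    using emeasure_cball_aux [of "{..<N} - {0}" r] assms by (simp add: D_def Int_def conj_commute)
  have "insert 0 ({..<N} - {0}) = {..<N}" using assms by auto
  then have "emeasure (lborel_vec N) (cylinder N a c r) =
      (\<integral>\<^sup>+y. \<integral>\<^sup>+x. indicator (cylinder N a c r) (x(0 := y)) \<partial>?Q \<partial>lborel)"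
    using product_nn_integral_insert_rev [of "{..<N} - {0}" 0 "indicator (cylinder N a c r)"]
      sets_cylinder [OF assms(1)] by simp
  also have "\<dots> = (\<integral>\<^sup>+y. indicator {a..c} y * emeasure ?Q D \<partial>lborel)"
  proof (intro nn_integral_cong)
    fix y :: real
    have "indicator (cylinder N a c r) (x(0 := y)) = (indicator {a..c} y * indicator D x :: ennreal)"
      if "x \<in> space ?Q" for x
    proof -
      have "x(0 := y) \<in> space (lborel_vec N)"
        "(\<Sum>i\<in>{..<N} - {0}. ((x(0 := y)) i)\<^sup>2) = (\<Sum>i\<in>{..<N} - {0}. (x i)\<^sup>2)"
        using that assms by (auto simp: space_PiM PiE_def extensional_def intro!: sum.cong)
      with that show ?thesis by (simp add: D_def cylinder_def indicator_def)
    qed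
    then have "(\<integral>\<^sup>+x. indicator (cylinder N a c r) (x(0 := y)) \<partial>?Q) = (\<integral>\<^sup>+x. indicator {a..c} y * indicator D x \<partial>?Q)"
      by (rule nn_integral_cong)
    also have "\<dots> = indicator {a..c} y * emeasure ?Q D"
      by (rule nn_integral_cmult_indicator) fact
    finally show "(\<integral>\<^sup>+x. indicator (cylinder N a c r) (x(0 := y)) \<partial>?Q) = indicator {a..c} y * emeasure ?Q D" .
  qed
  also have "\<dots> = emeasure ?Q D * emeasure lborel {a..c}"
    by (subst mult.commute) (simp add: nn_integral_cmult_indicator)
  also have "\<dots> = ennreal ((c - a) * unit_ball_vol (real (N - 1)) * r ^ (N - 1))"
    using assms by (simp add: D ennreal_mult' [symmetric] mult.commute)
  finally show ?thesis .
qed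

lemma vinner_self_remove0:
  assumes "1 \<le> N"
  shows "vinner N x x = (x 0)\<^sup>2 + (\<Sum>i\<in>{..<N} - {0}. (x i)\<^sup>2)"
  using assms sum.remove[of "{..<N}" 0 "\<lambda>i. (x i)\<^sup>2"] by (simp add: vinner_def power2_eq_square)

lemma emeasure_unit_ball_le:
  assumes "1 \<le> N"
  shows "emeasure (lborel_vec N) {x \<in> space (lborel_vec N). vinner N x x \<le> 1}
    \<le> ennreal (2 * unit_ball_vol (real (N - 1)))"
proof -
  have "{x \<in> space (lborel_vec N). vinner N x x \<le> 1} \<subseteq> cylinder N (-1) 1 1"
  proof safe
    fix x assume x: "x \<in> space (lborel_vec N)" "vinner N x x \<le> 1"
    moreover have "0 \<le> (\<Sum>i\<in>{..<N} - {0}. (x i)\<^sup>2)" by (simp add: sum_nonneg)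
    ultimately have "(x 0)\<^sup>2 \<le> 1" "(\<Sum>i\<in>{..<N} - {0}. (x i)\<^sup>2) \<le> 1"
      using vinner_self_remove0 [OF assms, of x] zero_le_power2 [of "x 0"] by linarith+
    with x show "x \<in> cylinder N (-1) 1 1"
      by (auto simp: cylinder_def abs_square_le_1 abs_le_iff)
  qed
  then have "emeasure (lborel_vec N) {x \<in> space (lborel_vec N). vinner N x x \<le> 1} \<le>
      emeasure (lborel_vec N) (cylinder N (-1) 1 1)"
    by (rule emeasure_mono) (rule sets_cylinder [OF assms])
  also have "\<dots> = ennreal (2 * unit_ball_vol (real (N - 1)))"
    using emeasure_cylinder [of N "-1" 1 1] assms by simp
  finally show ?thesis .
qed

definition unit_cone :: "nat \<Rightarrow> real \<Rightarrow> (nat \<Rightarrow> real) \<Rightarrow> (nat \<Rightarrow> real) set" where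
  "unit_cone N \<theta> t = {x \<in> space (lborel_vec N).
     0 < vinner N x x \<and> vinner N x x \<le> 1 \<and> cos \<theta> * sqrt (vinner N x x) \<le> vinner N t x}"

lemma mem_unit_cone_iff:
  "x \<in> unit_cone N \<theta> t \<longleftrightarrow> x \<in> space (lborel_vec N) \<and>
     0 < vinner N x x \<and> vinner N x x \<le> 1 \<and> 0 \<le> vinner N t x - cos \<theta> * sqrt (vinner N x x)"
  by (auto simp: unit_cone_def)

lemma sets_unit_cone [measurable]: "unit_cone N \<theta> t \<in> sets (lborel_vec N)"
proof -
  have "unit_cone N \<theta> t = {x \<in> space (lborel_vec N).
      0 < vinner N x x \<and> vinner N x x \<le> 1 \<and> 0 \<le> vinner N t x - cos \<theta> * sqrt (vinner N x x)}"
    by (auto simp: mem_unit_cone_iff)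
  also have "\<dots> \<in> sets (lborel_vec N)"
    unfolding vinner_def by measurable
  finally show ?thesis .
qed

lemma
  assumes [measurable]: "\<And>i. i < N \<Longrightarrow> (\<lambda>u. t u i) \<in> borel_measurable M"
  shows pred_mem_unit_cone [measurable]: "Measurable.pred M (\<lambda>u. x \<in> unit_cone N \<theta> (t u))"
    and pred_mem_unit_cone_pair [measurable]:
      "Measurable.pred (M \<Otimes>\<^sub>M lborel_vec N) (\<lambda>p. snd p \<in> unit_cone N \<theta> (t (fst p)))"
proof -
  show "Measurable.pred M (\<lambda>u. x \<in> unit_cone N \<theta> (t u))"
    unfolding mem_unit_cone_iff vinner_def by measurable
  have "Measurable.pred (M \<Otimes>\<^sub>M lborel_vec N) (\<lambda>p. 0 < vinner N (snd p) (snd p) \<and>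
      vinner N (snd p) (snd p) \<le> 1 \<and> 0 \<le> vinner N (t (fst p)) (snd p) - cos \<theta> * sqrt (vinner N (snd p) (snd p)))"
    unfolding vinner_def by measurable
  then show "Measurable.pred (M \<Otimes>\<^sub>M lborel_vec N) (\<lambda>p. snd p \<in> unit_cone N \<theta> (t (fst p)))"
    by (rule measurable_cong [THEN iffD1, rotated]) (auto simp: mem_unit_cone_iff space_pair_measure)
qed

lemma vinner_axis0: "1 \<le> N \<Longrightarrow> vinner N (\<lambda>i. of_bool (i = 0)) x = x 0"
  by (simp add: vinner_def sum.remove [of "{..<N}" 0])

lemma emeasure_unit_cone_axis0:
  assumes "1 \<le> N" "vinner N t t = 1"
  shows "emeasure (lborel_vec N) (unit_cone N \<theta> t) =
    emeasure (lborel_vec N) (unit_cone N \<theta> (\<lambda>i. of_bool (i = 0)))"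
proof -
  define f :: "real \<times> real \<Rightarrow> ennreal"
    where "f p = indicator {q. 0 < snd q \<and> snd q \<le> 1 \<and> cos \<theta> * sqrt (snd q) \<le> fst q} p" for p
  have [measurable]: "f \<in> borel_measurable borel"
    unfolding f_def by (simp add: borel_prod [symmetric])
  have "indicator (unit_cone N \<theta> s) x = f (vinner N s x, vinner N x x)"
    if "x \<in> space (lborel_vec N)" for s x
    using that by (simp add: unit_cone_def f_def indicator_def)
  then have "emeasure (lborel_vec N) (unit_cone N \<theta> s) =
      (\<integral>\<^sup>+x. f (vinner N s x, vinner N x x) \<partial>lborel_vec N)" for s
    by (simp cong: nn_integral_cong flip: nn_integral_indicator)
  with assms show ?thesis
    by (simp add: nn_integral_vinner_axis vinner_axis0)
qed

lemma cone_point_of_tan_bound: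
  fixes \<theta> y T :: real
  assumes "0 < \<theta>" "\<theta> < pi / 2" "0 < y" "y \<le> cos \<theta>" "0 \<le> T" "cos \<theta> * sqrt T \<le> sin \<theta> * y"
  shows "0 < y\<^sup>2 + T" "y\<^sup>2 + T \<le> 1" "cos \<theta> * sqrt (y\<^sup>2 + T) \<le> y"
proof -
  have cos: "0 < cos \<theta>" using assms by (simp add: cos_gt_zero_pi)
  have "(cos \<theta>)\<^sup>2 * T \<le> (sin \<theta> * y)\<^sup>2"
    using power_mono [OF assms(6), of 2] assms(5) cos by (simp add: power_mult_distrib)
  then have key: "(cos \<theta>)\<^sup>2 * (y\<^sup>2 + T) \<le> y\<^sup>2"
    by (simp add: sin_squared_eq algebra_simps power_mult_distrib)
  show "0 < y\<^sup>2 + T" using assms by (simp add: add_pos_nonneg)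
  have "y\<^sup>2 \<le> (cos \<theta>)\<^sup>2" using assms by (simp add: power_mono)
  with key have "(cos \<theta>)\<^sup>2 * (y\<^sup>2 + T) \<le> (cos \<theta>)\<^sup>2 * 1" by simp
  with cos show "y\<^sup>2 + T \<le> 1" by (simp only: mult_le_cancel_left_pos zero_less_power)
  have "cos \<theta> * sqrt (y\<^sup>2 + T) = sqrt ((cos \<theta>)\<^sup>2 * (y\<^sup>2 + T))"
    using cos by (simp add: real_sqrt_mult)
  also have "\<dots> \<le> sqrt (y\<^sup>2)"
    using key by (rule real_sqrt_le_mono)
  also have "\<dots> = y"
    using assms(3) by simp
  finally show "cos \<theta> * sqrt (y\<^sup>2 + T) \<le> y" .
qed

lemma cylinder_subset_unit_cone_axis0:
  assumes "1 \<le> N" "0 < \<theta>" "\<theta> < pi / 2" "0 < lo" "cos \<theta> * \<rho> = sin \<theta> * lo"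
  shows "cylinder N lo (cos \<theta>) \<rho> \<subseteq> unit_cone N \<theta> (\<lambda>i. of_bool (i = 0))"
proof
  fix x assume "x \<in> cylinder N lo (cos \<theta>) \<rho>"
  then have x: "x \<in> space (lborel_vec N)" "x 0 \<in> {lo..cos \<theta>}"
    and rest: "sqrt (\<Sum>i\<in>{..<N} - {0}. (x i)\<^sup>2) \<le> \<rho>"
    by (simp_all add: cylinder_def)
  have cos: "0 < cos \<theta>" and sin: "0 < sin \<theta>"
    using assms(2,3) by (simp_all add: cos_gt_zero_pi sin_gt_zero)
  have "cos \<theta> * sqrt (\<Sum>i\<in>{..<N} - {0}. (x i)\<^sup>2) \<le> cos \<theta> * \<rho>"
    using rest cos by simp
  also have "\<dots> \<le> sin \<theta> * x 0"
    using assms(5) x(2) sin by simp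
  finally have "cos \<theta> * sqrt (\<Sum>i\<in>{..<N} - {0}. (x i)\<^sup>2) \<le> sin \<theta> * x 0" .
  moreover have "0 < x 0" "x 0 \<le> cos \<theta>" "0 \<le> (\<Sum>i\<in>{..<N} - {0}. (x i)\<^sup>2)"
    using assms(4) x(2) by (auto intro: sum_nonneg)
  ultimately have "0 < (x 0)\<^sup>2 + (\<Sum>i\<in>{..<N} - {0}. (x i)\<^sup>2)"
    "(x 0)\<^sup>2 + (\<Sum>i\<in>{..<N} - {0}. (x i)\<^sup>2) \<le> 1"
    "cos \<theta> * sqrt ((x 0)\<^sup>2 + (\<Sum>i\<in>{..<N} - {0}. (x i)\<^sup>2)) \<le> x 0"
    using cone_point_of_tan_bound [OF assms(2,3)] by blast+
  with x(1) assms(1) show "x \<in> unit_cone N \<theta> (\<lambda>i. of_bool (i = 0))"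
    by (simp add: unit_cone_def vinner_axis0 vinner_self_remove0)
qed

lemma emeasure_unit_cone_ge:
  assumes "1 \<le> N" "0 < \<theta>" "\<theta> < pi / 2" "vinner N t t = 1"
  shows "ennreal (cos \<theta> / (N + 1) * unit_ball_vol (real (N - 1)) * (sin \<theta> * N / (N + 1)) ^ (N - 1))
    \<le> emeasure (lborel_vec N) (unit_cone N \<theta> t)"
proof -
  have cos: "0 < cos \<theta>" and sin: "0 < sin \<theta>"
    using assms by (simp_all add: cos_gt_zero_pi sin_gt_zero)
  define lo where "lo = cos \<theta> * N / (N + 1)"
  define \<rho> where "\<rho> = sin \<theta> * N / (N + 1)"
  have "0 < lo" "0 < \<rho>" "lo \<le> cos \<theta>"
    using assms(1) cos sin by (simp_all add: lo_def \<rho>_def divide_le_eq)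
  have "cos \<theta> - lo = cos \<theta> / (N + 1)"
    by (simp add: lo_def field_simps)
  then have "ennreal (cos \<theta> / (N + 1) * unit_ball_vol (real (N - 1)) * (sin \<theta> * N / (N + 1)) ^ (N - 1)) =
      emeasure (lborel_vec N) (cylinder N lo (cos \<theta>) \<rho>)"
    using emeasure_cylinder [OF assms(1) \<open>lo \<le> cos \<theta>\<close> \<open>0 < \<rho>\<close>] by (simp add: \<rho>_def)
  also have "\<dots> \<le> emeasure (lborel_vec N) (unit_cone N \<theta> (\<lambda>i. of_bool (i = 0)))"
    using assms \<open>0 < lo\<close> by (intro emeasure_mono cylinder_subset_unit_cone_axis0) (auto simp: lo_def \<rho>_def)
  also have "\<dots> = emeasure (lborel_vec N) (unit_cone N \<theta> t)"
    using assms by (simp add: emeasure_unit_cone_axis0)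
  finally show ?thesis .
qed

lemma exists_ge_of_nn_integral_ge:
  assumes "B \<in> sets M" "emeasure M B \<le> ennreal W" "0 < W" "0 < L"
    and "ennreal L \<le> (\<integral>\<^sup>+x. h x \<partial>M)" and "\<And>x. x \<in> space M \<Longrightarrow> x \<notin> B \<Longrightarrow> h x = 0"
  shows "\<exists>x\<in>B. ennreal (L / (2 * W)) \<le> h x"
proof (rule ccontr)
  assume "\<not> ?thesis"
  then have "h x \<le> ennreal (L / (2 * W)) * indicator B x" if "x \<in> space M" for x
    using that assms(6) [of x] by (cases "x \<in> B") auto
  then have "(\<integral>\<^sup>+x. h x \<partial>M) \<le> (\<integral>\<^sup>+x. ennreal (L / (2 * W)) * indicator B x \<partial>M)"
    by (rule nn_integral_mono)
  also have "\<dots> = ennreal (L / (2 * W)) * emeasure M B"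
    using assms(1) by (rule nn_integral_cmult_indicator)
  also have "\<dots> \<le> ennreal (L / (2 * W)) * ennreal W"
    using assms(2) by (rule mult_left_mono) simp
  also have "\<dots> = ennreal (L / 2)"
    using assms(3,4) by (simp add: ennreal_mult' [symmetric])
  finally have "(\<integral>\<^sup>+x. h x \<partial>M) \<le> ennreal (L / 2)" .
  with assms(5) have "ennreal L \<le> ennreal (L / 2)"
    by (rule order_trans)
  with assms(4) show False
    by (simp add: ennreal_le_iff)
qed

definition cap_bound :: "nat \<Rightarrow> real \<Rightarrow> real" where
  "cap_bound N \<theta> = cos \<theta> / (4 * (N + 1)) * (sin \<theta> * N / (N + 1)) ^ (N - 1)"

lemma nn_integral_emeasure_unit_cone_swap:
  fixes U :: "'a measure" and t :: "'a \<Rightarrow> nat \<Rightarrow> real"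
  assumes "sigma_finite_measure U" and [measurable]: "\<And>i. i < N \<Longrightarrow> (\<lambda>u. t u i) \<in> borel_measurable U"
  shows "(\<integral>\<^sup>+u. emeasure (lborel_vec N) (unit_cone N \<theta> (t u)) \<partial>U) =
    (\<integral>\<^sup>+g. emeasure U {u \<in> space U. g \<in> unit_cone N \<theta> (t u)} \<partial>lborel_vec N)"
proof -
  interpret product_sigma_finite "\<lambda>_ :: nat. lborel :: real measure" by standard
  interpret pair_sigma_finite U "lborel_vec N"
    using assms(1) sigma_finite by (simp add: pair_sigma_finite_def)
  define F where "F u g = (if g \<in> unit_cone N \<theta> (t u) then 1 else 0 :: ennreal)" for u g
  have "(\<lambda>(u, g). F u g) \<in> borel_measurable (U \<Otimes>\<^sub>M lborel_vec N)"
    unfolding F_def case_prod_beta by measurable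
  then have "(\<integral>\<^sup>+u. \<integral>\<^sup>+g. F u g \<partial>lborel_vec N \<partial>U) = (\<integral>\<^sup>+g. \<integral>\<^sup>+u. F u g \<partial>U \<partial>lborel_vec N)"
    by (rule Fubini' [symmetric])
  moreover have "emeasure (lborel_vec N) (unit_cone N \<theta> (t u)) = (\<integral>\<^sup>+g. F u g \<partial>lborel_vec N)" for u
    by (simp add: F_def flip: nn_integral_indicator of_bool_def indicator_def)
  moreover have "emeasure U {u \<in> space U. g \<in> unit_cone N \<theta> (t u)} = (\<integral>\<^sup>+u. F u g \<partial>U)" for g
  proof -
    have "emeasure U {u \<in> space U. g \<in> unit_cone N \<theta> (t u)} =
        (\<integral>\<^sup>+u. indicator {u \<in> space U. g \<in> unit_cone N \<theta> (t u)} u \<partial>U)"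
      by (rule nn_integral_indicator [symmetric]) measurable
    also have "\<dots> = (\<integral>\<^sup>+u. F u g \<partial>U)"
      by (rule nn_integral_cong) (simp add: F_def)
    finally show ?thesis .
  qed
  ultimately show ?thesis by simp
qed

lemma exists_vector_in_many_unit_cones:
  fixes U :: "'a measure" and t :: "'a \<Rightarrow> nat \<Rightarrow> real"
  assumes "sigma_finite_measure U" "emeasure U (space U) = 1"
    and N: "1 \<le> N" and \<theta>: "0 < \<theta>" "\<theta> < pi / 2"
    and [measurable]: "\<And>i. i < N \<Longrightarrow> (\<lambda>u. t u i) \<in> borel_measurable U"
    and t_unit: "\<And>u. u \<in> space U \<Longrightarrow> vinner N (t u) (t u) = 1"
  shows "\<exists>g \<in> space (lborel_vec N). 0 < vinner N g g \<and> vinner N g g \<le> 1 \<and>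
    ennreal (cap_bound N \<theta>) \<le> emeasure U {u \<in> space U. g \<in> unit_cone N \<theta> (t u)}"
proof -
  define V where "V = unit_ball_vol (real (N - 1))"
  define L where "L = cos \<theta> / (N + 1) * V * (sin \<theta> * N / (N + 1)) ^ (N - 1)"
  define B where "B = {g \<in> space (lborel_vec N). 0 < vinner N g g \<and> vinner N g g \<le> 1}"
  have "0 < V" by (simp add: V_def)
  have "0 < L"
    using \<theta> N \<open>0 < V\<close> by (simp add: L_def cos_gt_zero_pi sin_gt_zero)
  have "B \<in> sets (lborel_vec N)"
    unfolding B_def vinner_def by measurable
  moreover have "emeasure (lborel_vec N) B \<le> emeasure (lborel_vec N) {g \<in> space (lborel_vec N). vinner N g g \<le> 1}"
    by (rule emeasure_mono) (auto simp: B_def vinner_def)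
  then have "emeasure (lborel_vec N) B \<le> ennreal (2 * V)"
    using emeasure_unit_ball_le [OF N] by (simp add: V_def)
  moreover have "ennreal L \<le> (\<integral>\<^sup>+g. emeasure U {u \<in> space U. g \<in> unit_cone N \<theta> (t u)} \<partial>lborel_vec N)"
  proof -
    have "ennreal L = (\<integral>\<^sup>+u. ennreal L \<partial>U)"
      using assms(2) by simp
    also have "\<dots> \<le> (\<integral>\<^sup>+u. emeasure (lborel_vec N) (unit_cone N \<theta> (t u)) \<partial>U)"
      unfolding L_def V_def using N \<theta> t_unit by (intro nn_integral_mono emeasure_unit_cone_ge) auto
    also have "\<dots> = (\<integral>\<^sup>+g. emeasure U {u \<in> space U. g \<in> unit_cone N \<theta> (t u)} \<partial>lborel_vec N)"
      using assms(1) by (rule nn_integral_emeasure_unit_cone_swap) measurable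
    finally show ?thesis .
  qed
  moreover have "emeasure U {u \<in> space U. g \<in> unit_cone N \<theta> (t u)} = 0" if "g \<notin> B" for g
  proof -
    have "{u \<in> space U. g \<in> unit_cone N \<theta> (t u)} = {}"
      using that by (auto simp: B_def unit_cone_def)
    then show ?thesis by (simp only: emeasure_empty)
  qed
  ultimately have "\<exists>g\<in>B. ennreal (L / (2 * (2 * V))) \<le> emeasure U {u \<in> space U. g \<in> unit_cone N \<theta> (t u)}"
    using \<open>0 < V\<close> \<open>0 < L\<close> by (intro exists_ge_of_nn_integral_ge) auto
  moreover have "L / (2 * (2 * V)) = cap_bound N \<theta>"
    using \<open>0 < V\<close> by (simp add: L_def cap_bound_def)
  ultimately show ?thesis
    by (auto simp: B_def)
qed

lemma vinner_divide_left: "vinner N (\<lambda>i. v i / c) x = vinner N v x / c"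
  and vinner_divide_right: "vinner N v (\<lambda>i. x i / c) = vinner N v x / c"
  by (simp_all add: vinner_def sum_divide_distrib)

lemma vnorm_normalize:
  assumes "0 < vinner N g g"
  shows "vnorm N (\<lambda>i. g i / sqrt (vinner N g g)) = 1"
  using assms by (simp add: vnorm_eq_sqrt_vinner vinner_divide_left vinner_divide_right)

lemma mem_unit_cone_normalize:
  assumes "0 < S" "g \<in> space (lborel_vec N)" "0 < vinner N g g" "vinner N g g \<le> 1"
  shows "g \<in> unit_cone N \<theta> (\<lambda>i. v i / S) \<longleftrightarrow> S * cos \<theta> \<le> vinner N v (\<lambda>i. g i / sqrt (vinner N g g))"
  using assms by (simp add: unit_cone_def vinner_divide_left vinner_divide_right
      pos_le_divide_eq ac_simps)

lemma exists_direction_with_large_cap: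
  fixes s :: "real \<Rightarrow> nat \<Rightarrow> real"
  assumes "1 \<le> N" "0 < S" "0 < \<theta>" "\<theta> < pi / 2"
    and "\<And>i. i < N \<Longrightarrow> (\<lambda>u. s u i) \<in> borel_measurable (restrict_space lborel {0..<1})"
    and "\<And>u. u \<in> {0..<1} \<Longrightarrow> vnorm N (s u) = S"
  shows "\<exists>g. vnorm N g = 1 \<and> cap_bound N \<theta> \<le> measure lborel {u \<in> {0..<1}. S * cos \<theta> \<le> vinner N (s u) g}"
proof -
  define U where "U = restrict_space lborel {0..<1 :: real}"
  define t where "t = (\<lambda>u i. s u i / S)"
  have space_U: "space U = {0..<1}" by (simp add: U_def)
  have U_1: "emeasure U (space U) = 1"
    by (simp add: U_def emeasure_restrict_space space_restrict_space)
  have "sigma_finite_measure U"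
    unfolding U_def by (rule sigma_finite_measure_restrict_space) (simp_all add: sigma_finite_lborel)
  moreover have "(\<lambda>u. t u i) \<in> borel_measurable U" if "i < N" for i
    using assms(5) [OF that] by (simp add: t_def U_def)
  moreover have "vinner N (t u) (t u) = 1" if "u \<in> space U" for u
  proof -
    have "sqrt (vinner N (s u) (s u)) = S"
      using assms(6) that by (simp add: space_U vnorm_eq_sqrt_vinner)
    then have "vinner N (s u) (s u) = S\<^sup>2"
      by (metis real_sqrt_pow2 sum_nonneg vinner_def zero_le_square)
    with assms(2) show ?thesis
      by (simp add: t_def vinner_divide_left vinner_divide_right power2_eq_square)
  qed
  ultimately obtain g where g: "g \<in> space (lborel_vec N)" "0 < vinner N g g" "vinner N g g \<le> 1"
    and large: "ennreal (cap_bound N \<theta>) \<le> emeasure U {u \<in> space U. g \<in> unit_cone N \<theta> (t u)}"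
    using exists_vector_in_many_unit_cones [OF _ U_1 assms(1,3,4)] by blast
  interpret U: finite_measure U
    by (rule finite_measureI) (simp add: U_1)
  define g' where "g' i = g i / sqrt (vinner N g g)" for i
  have "{u \<in> space U. g \<in> unit_cone N \<theta> (t u)} = {u \<in> {0..<1}. S * cos \<theta> \<le> vinner N (s u) g'}"
    using mem_unit_cone_normalize [OF assms(2) g] by (auto simp: space_U t_def g'_def [abs_def])
  with large have "cap_bound N \<theta> \<le> measure U {u \<in> {0..<1}. S * cos \<theta> \<le> vinner N (s u) g'}"
    by (simp add: U.emeasure_eq_measure ennreal_le_iff [OF measure_nonneg])
  also have "\<dots> = measure lborel {u \<in> {0..<1}. S * cos \<theta> \<le> vinner N (s u) g'}"
    unfolding U_def by (subst measure_restrict_space) auto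
  finally show ?thesis
    using vnorm_normalize [OF g(2)] unfolding g'_def [abs_def] by blast
qed

lemma exp_neg_one_le:
  assumes "1 \<le> N"
  shows "exp (-1) \<le> (real N / (real N + 1)) ^ (N - 1)"
proof -
  have "(1 + 1 / real N) ^ N \<le> exp (1 / real N) ^ N"
    using assms by (intro power_mono exp_ge_add_one_self) auto
  also have "\<dots> = exp 1"
    using assms by (simp add: exp_of_nat_mult [symmetric])
  finally have "inverse (exp 1) \<le> inverse ((1 + 1 / real N) ^ N)"
    by (rule le_imp_inverse_le) (use assms in \<open>auto intro!: zero_less_power add_pos_nonneg\<close>)
  also have "\<dots> = (real N / (real N + 1)) ^ N"
    using assms by (simp add: power_inverse field_simps)
  also have "\<dots> \<le> (real N / (real N + 1)) ^ (N - 1)"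
    by (rule power_decreasing) auto
  finally show ?thesis by (simp add: exp_minus)
qed

definition cap_correction :: "nat \<Rightarrow> real \<Rightarrow> real" where
  "cap_correction N \<theta> = 2 / real N * (ln (real N + 1) + ln (4 * exp 1 * tan \<theta>))"

lemma cap_correction_bigtheta:
  "(\<lambda>N. cap_correction N \<theta>) \<in> \<Theta>(\<lambda>N. ln (real N) / real N)"
  unfolding cap_correction_def by real_asymp

lemma exp_le_cap_bound:
  assumes "1 \<le> N" "0 < \<theta>" "\<theta> < pi / 2"
  shows "exp (real N / 2 * (ln ((sin \<theta>)\<^sup>2) - cap_correction N \<theta>)) \<le> cap_bound N \<theta>"
proof -
  have cos: "0 < cos \<theta>" and sin: "0 < sin \<theta>"
    using assms by (simp_all add: cos_gt_zero_pi sin_gt_zero)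
  have sin_pow: "sin \<theta> ^ N = sin \<theta> * sin \<theta> ^ (N - 1)"
    using assms(1) by (cases N) simp_all
  have "0 < tan \<theta>"
    using sin cos by (simp add: tan_def)
  then have "ln ((sin \<theta>) ^ N) - ln ((real N + 1) * (4 * exp 1 * tan \<theta>))
      = real N * ln (sin \<theta>) - (ln (real N + 1) + ln (4 * exp 1 * tan \<theta>))"
    using sin by (simp add: ln_realpow ln_mult)
  also have "\<dots> = real N / 2 * (ln ((sin \<theta>)\<^sup>2) - cap_correction N \<theta>)"
    using assms(1) sin by (simp add: cap_correction_def ln_realpow field_simps)
  finally have exponent: "real N / 2 * (ln ((sin \<theta>)\<^sup>2) - cap_correction N \<theta>)
      = ln ((sin \<theta>) ^ N) - ln ((real N + 1) * (4 * exp 1 * tan \<theta>))" ..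
  have "exp (real N / 2 * (ln ((sin \<theta>)\<^sup>2) - cap_correction N \<theta>))
      = (sin \<theta>) ^ N / ((real N + 1) * (4 * exp 1 * tan \<theta>))"
    unfolding exponent using sin \<open>0 < tan \<theta>\<close> by (simp add: exp_diff)
  also have "\<dots> = cos \<theta> / (4 * (N + 1)) * (sin \<theta>) ^ (N - 1) * exp (-1)"
  proof -
    have "sin \<theta> * p / (a * (4 * exp 1 * tan \<theta>)) = cos \<theta> / (4 * a) * p * exp (-1)" if "0 < a" for a p
      using that sin cos by (simp add: tan_def exp_minus field_simps)
    from this [of "real N + 1" "sin \<theta> ^ (N - 1)"] show ?thesis
      by (simp add: sin_pow add.commute)
  qed
  also have "\<dots> \<le> cos \<theta> / (4 * (N + 1)) * (sin \<theta>) ^ (N - 1) * (real N / (real N + 1)) ^ (N - 1)"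
    using exp_neg_one_le [OF assms(1)] sin cos by (intro mult_left_mono) auto
  also have "\<dots> = cap_bound N \<theta>"
  proof -
    have "(sin \<theta> * N / (N + 1)) ^ (N - 1) = (sin \<theta>) ^ (N - 1) * (real N / (real N + 1)) ^ (N - 1)"
      by (simp add: power_mult_distrib [symmetric] add.commute)
    then show ?thesis by (simp add: cap_bound_def)
  qed
  finally show ?thesis .
qed

theorem mainTheorem4:
  "\<exists>c :: nat \<Rightarrow> real \<Rightarrow> real.
     (\<forall>\<theta>. 0 < \<theta> \<and> \<theta> < pi / 2 \<longrightarrow>
        (\<lambda>N. c N \<theta>) \<in> \<Theta>(\<lambda>N. ln (real N) / real N)) \<and>
     (\<forall>(N::nat) (S::real) (s :: real \<Rightarrow> nat \<Rightarrow> real) (\<theta>::real).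
        N \<ge> 1 \<longrightarrow> S > 0 \<longrightarrow>
        (\<forall>i<N. (\<lambda>u. s u i) \<in> borel_measurable (restrict_space lborel {0..<1})) \<longrightarrow>
        (\<forall>u\<in>{0..<1}. vnorm N (s u) = S) \<longrightarrow>
        0 < \<theta> \<longrightarrow> \<theta> < pi / 2 \<longrightarrow>
        (\<exists>g :: nat \<Rightarrow> real. vnorm N g = 1 \<and>
           measure lborel {u \<in> {0..<1}. vinner N (s u) g \<ge> S * cos \<theta>}
             \<ge> exp (real N / 2 * (ln ((sin \<theta>)\<^sup>2) - c N \<theta>))))"
proof (intro exI [of _ cap_correction] conjI allI impI)
  fix \<theta> :: real
  show "(\<lambda>N. cap_correction N \<theta>) \<in> \<Theta>(\<lambda>N. ln (real N) / real N)"
    by (rule cap_correction_bigtheta)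
next
  fix N :: nat and S \<theta> :: real and s :: "real \<Rightarrow> nat \<Rightarrow> real"
  assume "1 \<le> N" "0 < S" "\<forall>i<N. (\<lambda>u. s u i) \<in> borel_measurable (restrict_space lborel {0..<1})"
    "\<forall>u\<in>{0..<1}. vnorm N (s u) = S" "0 < \<theta>" "\<theta> < pi / 2"
  then obtain g where "vnorm N g = 1" "cap_bound N \<theta> \<le> measure lborel {u \<in> {0..<1}. S * cos \<theta> \<le> vinner N (s u) g}"
    using exists_direction_with_large_cap [of N S \<theta> s] by blast
  with exp_le_cap_bound [OF \<open>1 \<le> N\<close> \<open>0 < \<theta>\<close> \<open>\<theta> < pi / 2\<close>]
  show "\<exists>g. vnorm N g = 1 \<and> exp (real N / 2 * (ln ((sin \<theta>)\<^sup>2) - cap_correction N \<theta>))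
      \<le> measure lborel {u \<in> {0..<1}. S * cos \<theta> \<le> vinner N (s u) g}"
    by (blast intro: order_trans)
qed

end
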